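(* The class of graphs isomorphic to $KB(G)$ for some $K_3$-free graph $G$ is a proper subclass of the class of graphs isomorphic to $H^2$ for some graph $H$. (In particular, the square of the net graph is not isomorphic to $KB(G)$ for any $K_3$-free graph $G$.)
   Context: All graphs are finite and simple. A biclique of a graph $G$ is a set $P\subseteq V(G)$ such that the induced subgraph $G[P]$ is a complete bipartite graph with both parts nonempty, and $P$ is inclusion-maximal with this property. The biclique graph $KB(G)$ has the set of bicliques of $G$ as vertex set, two distinct bicliques being adjacent iff they intersect. For a graph $H$, the square $H^2$ has vertex set $V(H)$, two distinct vertices being adjacent iff their distance in $H$ is at most $2$. The net is the graph on six vertices $x_1,x_2,x_3,s_1,s_2,s_3$ whose edges are $x_1x_2,x_2x_3,x_1x_3,x_1s_1,x_2s_2,x_3s_3$. *)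

theory Defs
  imports Main
begin

type_synonym 'a graph = "'a set \<times> ('a \<Rightarrow> 'a \<Rightarrow> bool)"

definition is_graph :: "'a graph \<Rightarrow> bool" where
  "is_graph G \<longleftrightarrow> finite (fst G) \<and>
     (\<forall>x y. snd G x y \<longrightarrow> x \<in> fst G \<and> y \<in> fst G \<and> x \<noteq> y \<and> snd G y x)"

definition triangle_free :: "'a graph \<Rightarrow> bool" where
  "triangle_free G \<longleftrightarrow> \<not> (\<exists>x y z. snd G x y \<and> snd G y z \<and> snd G x z)"

definition induces_complete_bipartite :: "'a graph \<Rightarrow> 'a set \<Rightarrow> bool" where
  "induces_complete_bipartite G P \<longleftrightarrow> P \<subseteq> fst G \<and>
     (\<exists>A B. A \<noteq> {} \<and> B \<noteq> {} \<and> A \<inter> B = {} \<and> A \<union> B = P \<and>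
        (\<forall>x\<in>A. \<forall>y\<in>B. snd G x y) \<and>
        (\<forall>x\<in>A. \<forall>y\<in>A. \<not> snd G x y) \<and>
        (\<forall>x\<in>B. \<forall>y\<in>B. \<not> snd G x y))"

definition biclique :: "'a graph \<Rightarrow> 'a set \<Rightarrow> bool" where
  "biclique G P \<longleftrightarrow> induces_complete_bipartite G P \<and>
     (\<forall>Q. induces_complete_bipartite G Q \<and> P \<subseteq> Q \<longrightarrow> Q = P)"

definition KB :: "'a graph \<Rightarrow> 'a set graph" where
  "KB G = ({P. biclique G P}, (\<lambda>P Q. biclique G P \<and> biclique G Q \<and> P \<noteq> Q \<and> P \<inter> Q \<noteq> {}))"

definition graph_square :: "'a graph \<Rightarrow> 'a graph" where
  "graph_square H = (fst H, (\<lambda>x y. x \<in> fst H \<and> y \<in> fst H \<and> x \<noteq> y \<and>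
      (snd H x y \<or> (\<exists>z \<in> fst H. snd H x z \<and> snd H z y))))"

definition graph_iso :: "'a graph \<Rightarrow> 'b graph \<Rightarrow> bool" where
  "graph_iso G H \<longleftrightarrow> (\<exists>f. bij_betw f (fst G) (fst H) \<and>
     (\<forall>x\<in>fst G. \<forall>y\<in>fst G. snd G x y \<longleftrightarrow> snd H (f x) (f y)))"

text \<open>The net: x1,x2,x3 = 0,1,2 form a triangle; s_i = i+3 is pendant at x_i.\<close>
definition net :: "nat graph" where
  "net = ({0..5}, (\<lambda>u v. {u, v} \<in> {{0,1},{1,2},{0,2},{0,3},{1,4},{2,5}}))"

end

theory Submission
  imports Defs
begin

text \<open>In a triangle-free graph every non-isolated vertex v determines the biclique star(v):
  its neighbourhood N(v) against all vertices whose neighbourhood contains N(v). Call two bicliques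
  linked if they share a vertex v and one of them is star(v). Bicliques meeting in v are linked
  directly or through star(v), and conversely two links in a row always force an intersection;
  so KB(G) is the square of the link graph.

  If KB(G) were the square of the net, there would be three pairwise disjoint bicliques S_i and
  three bicliques X_i meeting every biclique. Each S_i contains a vertex whose star is not S_i;
  that star is one of the X's, call it Y_i, and the star of every vertex of S_i is S_i or Y_i.
  Vertices of S_i with star Y_i have equal neighbourhoods, while a vertex of S_i in Y_k and a vertex
  of S_k in Y_i with stars Y_i and Y_k are adjacent. Doing this for the three pairs gives a triangle.\<close>

lemma graph_adj_sym: "is_graph G \<Longrightarrow> snd G x y \<Longrightarrow> snd G y x"
  unfolding is_graph_def by blast

lemma graph_adj_irrefl: "is_graph G \<Longrightarrow> \<not> snd G x x"
  unfolding is_graph_def by blast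

lemma graph_adj_vertices: "is_graph G \<Longrightarrow> snd G x y \<Longrightarrow> x \<in> fst G \<and> y \<in> fst G"
  unfolding is_graph_def by blast

lemma triangle_freeD: "triangle_free G \<Longrightarrow> snd G x y \<Longrightarrow> snd G y z \<Longrightarrow> \<not> snd G x z"
  unfolding triangle_free_def by blast

lemma complete_bipartite_sides:
  assumes "is_graph G" and "induces_complete_bipartite G P"
  shows "\<exists>A\<subseteq>P. A \<noteq> {} \<and> P - A \<noteq> {} \<and>
    (\<forall>x\<in>P. \<forall>y\<in>P. snd G x y \<longleftrightarrow> (x \<in> A \<longleftrightarrow> y \<notin> A))"
proof -
  from assms(2) obtain A B where AB: "A \<noteq> {}" "B \<noteq> {}" "A \<inter> B = {}" "A \<union> B = P"
      "\<forall>x\<in>A. \<forall>y\<in>B. snd G x y" "\<forall>x\<in>A. \<forall>y\<in>A. \<not> snd G x y" "\<forall>x\<in>B. \<forall>y\<in>B. \<not> snd G x y"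
    unfolding induces_complete_bipartite_def by blast
  have "snd G x y \<longleftrightarrow> (x \<in> A \<longleftrightarrow> y \<notin> A)" if "x \<in> P" "y \<in> P" for x y
  proof -
    have "x \<in> B \<longleftrightarrow> x \<notin> A" "y \<in> B \<longleftrightarrow> y \<notin> A" using that AB(3,4) by blast+
    then show ?thesis using AB(5-7) graph_adj_sym[OF assms(1), of y x]
      by (cases "x \<in> A"; cases "y \<in> A") auto
  qed
  moreover have "A \<subseteq> P" "P - A \<noteq> {}" using AB by blast+
  ultimately show ?thesis using AB(1) by (intro exI[of _ A]) simp
qed

lemma complete_bipartite_has_neighbour:
  assumes "is_graph G" "induces_complete_bipartite G P" "u \<in> P"
  shows "\<exists>y\<in>P. snd G u y"
proof -
  obtain A where A: "A \<subseteq> P" "A \<noteq> {}" "P - A \<noteq> {}"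
    and adj: "\<forall>x\<in>P. \<forall>y\<in>P. snd G x y \<longleftrightarrow> (x \<in> A \<longleftrightarrow> y \<notin> A)"
    using complete_bipartite_sides[OF assms(1,2)] by blast
  have "\<exists>y\<in>P. u \<in> A \<longleftrightarrow> y \<notin> A"
  proof (cases "u \<in> A")
    case True then show ?thesis using A(3) by blast
  next
    case False then show ?thesis using A(1,2) by blast
  qed
  then show ?thesis using adj assms(3) by blast
qed

lemma complete_bipartite_nonadj_same_nbrs:
  assumes "is_graph G" "induces_complete_bipartite G P"
    and "x \<in> P" "y \<in> P" "w \<in> P" "\<not> snd G x y" "snd G x w"
  shows "snd G y w"
proof -
  obtain A where adj: "\<forall>x\<in>P. \<forall>y\<in>P. snd G x y \<longleftrightarrow> (x \<in> A \<longleftrightarrow> y \<notin> A)"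
    using complete_bipartite_sides[OF assms(1,2)] by blast
  have "x \<in> A \<longleftrightarrow> y \<in> A" "x \<in> A \<longleftrightarrow> w \<notin> A" using adj assms(3-7) by blast+
  then show ?thesis using adj assms(4,5) by blast
qed

lemma complete_bipartite_edge_dominates:
  assumes "is_graph G" "induces_complete_bipartite G P"
    and "u \<in> P" "u' \<in> P" "snd G u u'" "x \<in> P"
  shows "snd G x u \<or> snd G x u'"
proof -
  obtain A where adj: "\<forall>x\<in>P. \<forall>y\<in>P. snd G x y \<longleftrightarrow> (x \<in> A \<longleftrightarrow> y \<notin> A)"
    using complete_bipartite_sides[OF assms(1,2)] by blast
  have "u \<in> A \<longleftrightarrow> u' \<notin> A" using adj assms(3-5) by blast
  then show ?thesis using adj assms(3,4,6) by blast
qed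

subsection \<open>Bicliques\<close>

lemma biclique_complete_bipartite: "biclique G P \<Longrightarrow> induces_complete_bipartite G P"
  unfolding biclique_def by blast

lemma biclique_subset_eq: "biclique G P \<Longrightarrow> biclique G Q \<Longrightarrow> P \<subseteq> Q \<Longrightarrow> P = Q"
  unfolding biclique_def by blast

lemma biclique_subset_vertices: "biclique G P \<Longrightarrow> P \<subseteq> fst G"
  unfolding biclique_def induces_complete_bipartite_def by blast

lemma biclique_nonempty: "biclique G P \<Longrightarrow> P \<noteq> {}"
  unfolding biclique_def induces_complete_bipartite_def by blast

lemma biclique_has_neighbour: "is_graph G \<Longrightarrow> biclique G P \<Longrightarrow> u \<in> P \<Longrightarrow> \<exists>y\<in>P. snd G u y"
  by (rule complete_bipartite_has_neighbour[OF _ biclique_complete_bipartite])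

lemma finite_bicliques: "is_graph G \<Longrightarrow> finite {P. biclique G P}"
  by (rule finite_subset[of _ "Pow (fst G)"]) (auto simp: is_graph_def dest: biclique_subset_vertices)

text \<open>In a triangle-free graph a vertex adjacent to all neighbours that some u has in a biclique P
  can be added to the side of u; maximality then puts it into P.\<close>
lemma biclique_absorbs_dominating_vertex:
  assumes g: "is_graph G" and t: "triangle_free G" and b: "biclique G P"
    and u: "u \<in> P" and z: "z \<in> fst G" and dom: "\<forall>y\<in>P. snd G u y \<longrightarrow> snd G z y"
  shows "z \<in> P"
proof (rule ccontr)
  assume zP: "z \<notin> P"
  have c: "induces_complete_bipartite G P" using b by (rule biclique_complete_bipartite)
  obtain y0 where y0: "y0 \<in> P" "snd G u y0" using biclique_has_neighbour[OF g b u] by blast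
  define A' where "A' = insert z {x\<in>P. \<not> snd G u x}"
  define B' where "B' = {x\<in>P. snd G u x}"
  have far_side: "snd G x y" if "x \<in> P" "\<not> snd G u x" "y \<in> B'" for x y
    using complete_bipartite_nonadj_same_nbrs[OF g c u \<open>x \<in> P\<close>] that unfolding B'_def by blast
  have near_side: "\<not> snd G x y" if "x \<in> P" "y \<in> P" "\<not> snd G u x" "\<not> snd G u y" for x y
    using complete_bipartite_nonadj_same_nbrs[OF g c \<open>x \<in> P\<close> u \<open>y \<in> P\<close>] that
      graph_adj_sym[OF g, of x u] by blast
  have z_indep: "\<not> snd G z w" if "w \<in> A'" for w
  proof
    assume zw: "snd G z w"
    then have "w \<in> P" "\<not> snd G u w"
      using that graph_adj_irrefl[OF g] unfolding A'_def by auto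
    then have "snd G w y0" using far_side y0 unfolding B'_def by blast
    then show False using triangle_freeD[OF t zw] dom y0 by blast
  qed
  have "induces_complete_bipartite G (insert z P)"
    unfolding induces_complete_bipartite_def
  proof (intro conjI exI)
    show "insert z P \<subseteq> fst G" using z biclique_subset_vertices[OF b] by blast
    show "\<forall>x\<in>A'. \<forall>y\<in>B'. snd G x y" using far_side dom unfolding A'_def B'_def by blast
    show "\<forall>x\<in>A'. \<forall>y\<in>A'. \<not> snd G x y"
      using z_indep graph_adj_sym[OF g] near_side unfolding A'_def by blast
    show "\<forall>x\<in>B'. \<forall>y\<in>B'. \<not> snd G x y" using triangle_freeD[OF t] unfolding B'_def by blast
  qed (use y0 zP in \<open>auto simp: A'_def B'_def\<close>)
  then show False using b zP unfolding biclique_def by blast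
qed

lemma biclique_subset_of_nbhd_closed:
  assumes g: "is_graph G" and bQ: "biclique G Q"
    and u: "u \<in> P" "u \<in> Q" and closed: "\<And>v w. v \<in> P \<Longrightarrow> snd G v w \<Longrightarrow> w \<in> P"
  shows "Q \<subseteq> P"
proof
  fix x assume x: "x \<in> Q"
  show "x \<in> P"
  proof (cases "snd G u x")
    case True then show ?thesis using closed u by blast
  next
    case False
    obtain y where y: "y \<in> Q" "snd G u y" using biclique_has_neighbour[OF g bQ u(2)] by blast
    have "snd G x y"
      using complete_bipartite_nonadj_same_nbrs[OF g biclique_complete_bipartite[OF bQ] u(2) x y(1) False y(2)] .
    then show ?thesis using closed[OF closed[OF u(1) y(2)]] graph_adj_sym[OF g] by blast
  qed
qed

subsection \<open>Stars\<close>

definition nbhd :: "'a graph \<Rightarrow> 'a \<Rightarrow> 'a set" where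
  "nbhd G v = {w. snd G v w}"

text \<open>For an isolated vertex v this degenerates to the whole vertex set, so stars are only taken
  at vertices of bicliques.\<close>
definition star :: "'a graph \<Rightarrow> 'a \<Rightarrow> 'a set" where
  "star G v = nbhd G v \<union> {w \<in> fst G. nbhd G v \<subseteq> nbhd G w}"

lemma adj_in_star: "snd G v w \<Longrightarrow> w \<in> star G v"
  unfolding star_def nbhd_def by blast

lemma self_in_star: "v \<in> fst G \<Longrightarrow> v \<in> star G v"
  unfolding star_def by blast

lemma in_starD: "w \<in> star G v \<Longrightarrow> snd G v w \<or> nbhd G v \<subseteq> nbhd G w"
  unfolding star_def nbhd_def by blast

lemma nbhd_eq_iff_adj: "nbhd G a = nbhd G b \<longleftrightarrow> (\<forall>x. snd G a x \<longleftrightarrow> snd G b x)"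
  unfolding nbhd_def by auto

lemma star_eq_if_nbhd_eq: "nbhd G a = nbhd G b \<Longrightarrow> star G a = star G b"
  unfolding star_def by simp

lemma star_biclique_of_adj:
  assumes g: "is_graph G" and t: "triangle_free G" and vy0: "snd G v y0"
  shows "biclique G (star G v)"
proof -
  define A where "A = {w \<in> fst G. nbhd G v \<subseteq> nbhd G w}"
  have v: "v \<in> fst G" using graph_adj_vertices[OF g vy0] by blast
  have cb: "induces_complete_bipartite G (star G v)"
    unfolding induces_complete_bipartite_def
  proof (intro conjI exI)
    show "star G v \<subseteq> fst G"
      unfolding star_def nbhd_def using graph_adj_vertices[OF g] by blast
    show "A \<noteq> {}" using v unfolding A_def by blast
    show "nbhd G v \<noteq> {}" using vy0 unfolding nbhd_def by blast
    show "A \<inter> nbhd G v = {}" using graph_adj_irrefl[OF g] unfolding A_def nbhd_def by blast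
    show "A \<union> nbhd G v = star G v" unfolding A_def star_def by blast
    show "\<forall>x\<in>A. \<forall>y\<in>nbhd G v. snd G x y" unfolding A_def nbhd_def by blast
    show "\<forall>x\<in>A. \<forall>y\<in>A. \<not> snd G x y"
      using vy0 triangle_freeD[OF t] graph_adj_sym[OF g] unfolding A_def nbhd_def by blast
    show "\<forall>x\<in>nbhd G v. \<forall>y\<in>nbhd G v. \<not> snd G x y"
      using triangle_freeD[OF t] unfolding nbhd_def by blast
  qed
  have "Q \<subseteq> star G v" if Q: "induces_complete_bipartite G Q" "star G v \<subseteq> Q" for Q
  proof
    fix z assume z: "z \<in> Q"
    show "z \<in> star G v"
    proof (cases "snd G v z")
      case True then show ?thesis by (rule adj_in_star)
    next
      case False
      have vQ: "v \<in> Q" using Q(2) self_in_star[OF v] by blast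
      have "snd G z y" if "snd G v y" for y
      proof -
        have "y \<in> Q" using Q(2) adj_in_star[OF that] by blast
        then show ?thesis by (rule complete_bipartite_nonadj_same_nbrs[OF g Q(1) vQ z _ False that])
      qed
      moreover have "z \<in> fst G" using Q(1) z unfolding induces_complete_bipartite_def by blast
      ultimately show ?thesis unfolding star_def nbhd_def by blast
    qed
  qed
  then show ?thesis unfolding biclique_def using cb by blast
qed

lemma star_biclique:
  assumes "is_graph G" "triangle_free G" "biclique G P" "u \<in> P"
  shows "biclique G (star G u)"
  using biclique_has_neighbour[OF assms(1,3,4)] star_biclique_of_adj[OF assms(1,2)] by blast

lemma biclique_meets_star_of_star_member:
  assumes g: "is_graph G" and b: "biclique G P" and u: "u \<in> P" and w: "w \<in> star G u"
  shows "P \<inter> star G w \<noteq> {}"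
proof (cases "snd G u w")
  case True
  then have "u \<in> star G w" by (rule adj_in_star[OF graph_adj_sym[OF g]])
  then show ?thesis using u by blast
next
  case False
  then have "nbhd G u \<subseteq> nbhd G w" using in_starD[OF w] by blast
  moreover obtain y where y: "y \<in> P" "snd G u y" using biclique_has_neighbour[OF g b u] by blast
  ultimately have "snd G w y" unfolding nbhd_def by blast
  then show ?thesis using y(1) adj_in_star[of G w y] by blast
qed

lemma bicliques_meet_if_same_star:
  assumes g: "is_graph G" and t: "triangle_free G" and bP: "biclique G P" and bQ: "biclique G Q"
    and u: "u \<in> P" and w: "w \<in> Q" and same: "star G u = star G w"
  shows "P \<inter> Q \<noteq> {}"
proof -
  have wV: "w \<in> fst G" using biclique_subset_vertices[OF bQ] w by blast
  have wu: "w \<in> star G u" using same self_in_star[OF wV] by simp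
  show ?thesis
  proof (cases "snd G u w")
    case True
    obtain y where y: "y \<in> P" "snd G u y" using biclique_has_neighbour[OF g bP u] by blast
    have "snd G y y'" if y': "y' \<in> Q" "snd G w y'" for y'
    proof (cases "y' = u")
      case True then show ?thesis using graph_adj_sym[OF g y(2)] by simp
    next
      case False
      have "y' \<in> star G u" using same adj_in_star[OF y'(2)] by simp
      moreover have "\<not> snd G u y'" using triangle_freeD[OF t \<open>snd G u w\<close> y'(2)] .
      ultimately have "snd G y' y" using in_starD[of y' G u] y(2) unfolding nbhd_def by blast
      then show ?thesis by (rule graph_adj_sym[OF g])
    qed
    then have "y \<in> Q"
      using biclique_absorbs_dominating_vertex[OF g t bQ w] biclique_subset_vertices[OF bP] y(1)
      by blast
    then show ?thesis using y(1) by blast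
  next
    case False
    then have "nbhd G u \<subseteq> nbhd G w" using in_starD[OF wu] by blast
    then have "w \<in> P"
      using biclique_absorbs_dominating_vertex[OF g t bP u wV] unfolding nbhd_def by blast
    then show ?thesis using w by blast
  qed
qed

lemma stars_meet_in_biclique:
  assumes g: "is_graph G" and b: "biclique G R" and u: "u \<in> R" and w: "w \<in> R"
  shows "star G u \<inter> star G w \<noteq> {}"
proof (cases "snd G u w")
  case True
  have "w \<in> star G w" using biclique_subset_vertices[OF b] w self_in_star[of w G] by blast
  then show ?thesis using adj_in_star[OF True] by blast
next
  case False
  obtain y where y: "y \<in> R" "snd G u y" using biclique_has_neighbour[OF g b u] by blast
  have "snd G w y"
    using complete_bipartite_nonadj_same_nbrs[OF g biclique_complete_bipartite[OF b] u w y(1) False y(2)] .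
  then show ?thesis using adj_in_star[OF y(2)] adj_in_star[of G w y] by blast
qed

lemma nbhd_eq_if_nonadj_in_stars:
  assumes g: "is_graph G" and "\<not> snd G a b" "b \<in> star G a" "a \<in> star G b"
  shows "nbhd G a = nbhd G b"
proof -
  have "\<not> snd G b a" using assms(2) graph_adj_sym[OF g, of b a] by blast
  then show ?thesis using assms(2) in_starD[OF assms(3)] in_starD[OF assms(4)] by blast
qed

lemma adj_if_in_distinct_stars:
  assumes g: "is_graph G" and "star G a \<noteq> star G b" "b \<in> star G a" "a \<in> star G b"
  shows "snd G a b"
  using assms nbhd_eq_if_nonadj_in_stars[OF g _ assms(3,4)] star_eq_if_nbhd_eq[of G a b] by blast

subsection \<open>A square root of the biclique graph\<close>

definition star_linked :: "'a graph \<Rightarrow> 'a set \<Rightarrow> 'a set \<Rightarrow> bool" where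
  "star_linked G P Q \<longleftrightarrow> biclique G P \<and> biclique G Q \<and> P \<noteq> Q \<and>
     (\<exists>v\<in>P \<inter> Q. P = star G v \<or> Q = star G v)"

definition KB_root :: "'a graph \<Rightarrow> 'a set graph" where
  "KB_root G = ({P. biclique G P}, star_linked G)"

lemma is_graph_KB_root: "is_graph G \<Longrightarrow> is_graph (KB_root G)"
  using finite_bicliques[of G] unfolding KB_root_def is_graph_def[of "(_, _)"] star_linked_def
  by auto

lemma meeting_bicliques_star_linked:
  assumes g: "is_graph G" and t: "triangle_free G" and bP: "biclique G P" and bQ: "biclique G Q"
    and PQ: "P \<noteq> Q" and v: "v \<in> P" "v \<in> Q"
  shows "star_linked G P Q \<or> (\<exists>R. star_linked G P R \<and> star_linked G R Q)"
proof -
  have bS: "biclique G (star G v)" by (rule star_biclique[OF g t bP v(1)])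
  have vS: "v \<in> star G v" using biclique_subset_vertices[OF bP] v self_in_star[of v G] by blast
  show ?thesis
  proof (cases "P = star G v \<or> Q = star G v")
    case True then show ?thesis using bP bQ PQ v unfolding star_linked_def by blast
  next
    case False
    then have "star_linked G P (star G v)" "star_linked G (star G v) Q"
      using bP bQ bS v vS unfolding star_linked_def by auto
    then show ?thesis by blast
  qed
qed

lemma star_linked_path_meet:
  assumes g: "is_graph G" and t: "triangle_free G"
    and PR: "star_linked G P R" and RQ: "star_linked G R Q"
  shows "P \<inter> Q \<noteq> {}"
proof -
  have b: "biclique G P" "biclique G Q" "biclique G R" using PR RQ unfolding star_linked_def by blast+
  obtain v where v: "v \<in> P" "v \<in> R" "P = star G v \<or> R = star G v"
    using PR unfolding star_linked_def by blast
  obtain w where w: "w \<in> R" "w \<in> Q" "R = star G w \<or> Q = star G w"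
    using RQ unfolding star_linked_def by blast
  consider "R = star G v" "R = star G w" | "R = star G v" "Q = star G w"
    | "P = star G v" "R = star G w" | "P = star G v" "Q = star G w"
    using v(3) w(3) by blast
  then show ?thesis
  proof cases
    case 1 then show ?thesis using bicliques_meet_if_same_star[OF g t b(1,2) v(1) w(2)] by simp
  next
    case 2 then show ?thesis using biclique_meets_star_of_star_member[OF g b(1) v(1)] w(1) by simp
  next
    case 3 then show ?thesis using biclique_meets_star_of_star_member[OF g b(2) w(2)] v(2) by blast
  next
    case 4 then show ?thesis using stars_meet_in_biclique[OF g b(3) v(2) w(1)] by simp
  qed
qed

lemma star_linked_bicliques: "star_linked G P Q \<Longrightarrow> biclique G P \<and> biclique G Q"
  unfolding star_linked_def by blast

lemma KB_eq_graph_square_KB_root: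
  assumes g: "is_graph G" and t: "triangle_free G"
  shows "KB G = graph_square (KB_root G)"
proof -
  have meet_iff: "P \<inter> Q \<noteq> {} \<longleftrightarrow>
      star_linked G P Q \<or> (\<exists>R\<in>{P. biclique G P}. star_linked G P R \<and> star_linked G R Q)"
    if PQ: "biclique G P" "biclique G Q" "P \<noteq> Q" for P Q
  proof
    assume "P \<inter> Q \<noteq> {}"
    then obtain v where "v \<in> P" "v \<in> Q" by blast
    then show "star_linked G P Q \<or> (\<exists>R\<in>{P. biclique G P}. star_linked G P R \<and> star_linked G R Q)"
      using meeting_bicliques_star_linked[OF g t PQ] star_linked_bicliques by blast
  next
    assume "star_linked G P Q \<or> (\<exists>R\<in>{P. biclique G P}. star_linked G P R \<and> star_linked G R Q)"
    then show "P \<inter> Q \<noteq> {}"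
      using star_linked_path_meet[OF g t] unfolding star_linked_def[of G P Q] by blast
  qed
  show ?thesis
    unfolding KB_def graph_square_def KB_root_def fst_conv snd_conv
  proof (intro arg_cong[where f = "Pair _"] ext)
    fix P Q
    show "(biclique G P \<and> biclique G Q \<and> P \<noteq> Q \<and> P \<inter> Q \<noteq> {}) \<longleftrightarrow>
      (P \<in> {P. biclique G P} \<and> Q \<in> {P. biclique G P} \<and> P \<noteq> Q \<and>
       (star_linked G P Q \<or> (\<exists>R\<in>{P. biclique G P}. star_linked G P R \<and> star_linked G R Q)))"
      using meet_iff[of P Q] by (cases "biclique G P \<and> biclique G Q \<and> P \<noteq> Q") auto
  qed
qed

lemma graph_iso_graph_square:
  assumes "graph_iso G H"
  shows "graph_iso (graph_square G) (graph_square H)"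
proof -
  obtain f where f: "bij_betw f (fst G) (fst H)"
    and adj0: "\<forall>x\<in>fst G. \<forall>y\<in>fst G. snd G x y \<longleftrightarrow> snd H (f x) (f y)"
    using assms unfolding graph_iso_def by blast
  have adj: "snd G x y \<longleftrightarrow> snd H (f x) (f y)" if "x \<in> fst G" "y \<in> fst G" for x y
    using adj0 that by simp
  have fG: "f x \<in> fst H" if "x \<in> fst G" for x using bij_betw_apply[OF f that] .
  have two_steps: "(\<exists>z\<in>fst G. snd G x z \<and> snd G z y) \<longleftrightarrow> (\<exists>z\<in>fst H. snd H (f x) z \<and> snd H z (f y))"
    if x: "x \<in> fst G" and y: "y \<in> fst G" for x y
  proof
    assume "\<exists>z\<in>fst G. snd G x z \<and> snd G z y"
    then obtain z where z: "z \<in> fst G" "snd G x z" "snd G z y" by blast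
    then have "snd H (f x) (f z)" "snd H (f z) (f y)" using adj[OF x z(1)] adj[OF z(1) y] by simp_all
    then show "\<exists>z\<in>fst H. snd H (f x) z \<and> snd H z (f y)" using fG[OF z(1)] by blast
  next
    assume "\<exists>z\<in>fst H. snd H (f x) z \<and> snd H z (f y)"
    then obtain z' where z': "z' \<in> fst H" "snd H (f x) z'" "snd H z' (f y)" by blast
    then have "z' \<in> f ` fst G" using bij_betw_imp_surj_on[OF f] by simp
    then obtain z where "z' = f z" "z \<in> fst G" by (rule imageE)
    with z' have z: "z \<in> fst G" "snd H (f x) (f z)" "snd H (f z) (f y)" by simp_all
    then have "snd G x z" "snd G z y" using adj[OF x z(1)] adj[OF z(1) y] by simp_all
    then show "\<exists>z\<in>fst G. snd G x z \<and> snd G z y" using z(1) by blast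
  qed
  show ?thesis
    unfolding graph_iso_def
  proof (intro exI[of _ f] conjI ballI)
    show "bij_betw f (fst (graph_square G)) (fst (graph_square H))"
      using f by (simp add: graph_square_def)
    fix x y assume "x \<in> fst (graph_square G)" "y \<in> fst (graph_square G)"
    then have x: "x \<in> fst G" and y: "y \<in> fst G" by (simp_all add: graph_square_def)
    have "f x = f y \<longleftrightarrow> x = y" by (rule inj_on_eq_iff[OF bij_betw_imp_inj_on[OF f] x y])
    then show "snd (graph_square G) x y \<longleftrightarrow> snd (graph_square H) (f x) (f y)"
      unfolding graph_square_def snd_conv using x y fG[OF x] fG[OF y] adj[OF x y] two_steps[OF x y]
      by simp
  qed
qed

lemma ex_nat_graph_iso:
  assumes g: "is_graph G"
  shows "\<exists>H :: nat graph. is_graph H \<and> graph_iso G H"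
proof -
  define n where "n = card (fst G)"
  obtain h where h: "bij_betw h {0..<n} (fst G)"
    using ex_bij_betw_nat_finite g unfolding is_graph_def n_def by blast
  define f where "f = inv_into {0..<n} h"
  have f: "bij_betw f (fst G) {0..<n}" unfolding f_def by (rule bij_betw_inv_into[OF h])
  have hf: "h (f x) = x" if "x \<in> fst G" for x
    unfolding f_def by (rule bij_betw_inv_into_right[OF h that])
  define H :: "nat graph" where "H = ({0..<n}, \<lambda>i j. i < n \<and> j < n \<and> snd G (h i) (h j))"
  have "i \<noteq> j \<and> snd G (h j) (h i)" if "snd G (h i) (h j)" for i j
    using that graph_adj_irrefl[OF g, of "h i"] graph_adj_sym[OF g that] by auto
  then have "is_graph H" unfolding is_graph_def H_def by auto
  moreover have "graph_iso G H"
    unfolding graph_iso_def H_def fst_conv snd_conv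
    using f hf bij_betw_apply[OF f] by (intro exI[of _ f] conjI ballI) auto
  ultimately show ?thesis by blast
qed

lemma KB_triangle_free_iso_graph_square:
  assumes "is_graph G" "triangle_free G"
  shows "\<exists>H :: nat graph. is_graph H \<and> graph_iso (KB G) (graph_square H)"
proof -
  obtain H :: "nat graph" where "is_graph H" "graph_iso (KB_root G) H"
    using ex_nat_graph_iso[OF is_graph_KB_root[OF assms(1)]] by blast
  then show ?thesis
    unfolding KB_eq_graph_square_KB_root[OF assms] using graph_iso_graph_square by blast
qed

subsection \<open>The square of the net\<close>

lemma net_adj:
  "snd net u v \<longleftrightarrow> (u, v) \<in> {(0,1),(1,0),(1,2),(2,1),(0,2),(2,0),(0,3),(3,0),(1,4),(4,1),(2,5),(5,2)}"
  unfolding net_def by (auto simp: doubleton_eq_iff)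

lemma net_vertices: "fst net = {0,1,2,3,4,5}"
  unfolding net_def by auto

lemma is_graph_net: "is_graph net"
  unfolding is_graph_def net_vertices net_adj by auto

lemma graph_square_net_adj:
  assumes "i \<le> 5" "j \<le> 5"
  shows "snd (graph_square net) i j \<longleftrightarrow> i \<noteq> j \<and> \<not> (3 \<le> i \<and> 3 \<le> j)"
proof -
  have "\<forall>i\<in>{0,1,2,3,4,5::nat}. \<forall>j\<in>{0,1,2,3,4,5::nat}.
     snd (graph_square net) i j \<longleftrightarrow> i \<noteq> j \<and> \<not> (3 \<le> i \<and> 3 \<le> j)"
    unfolding graph_square_def net_vertices snd_conv fst_conv net_adj by simp
  moreover have "i \<in> {0,1,2,3,4,5}" "j \<in> {0,1,2,3,4,5}" using assms by auto
  ultimately show ?thesis by blast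
qed

lemma KB_iso_indexing:
  assumes "graph_iso (KB G) H"
  obtains h where "bij_betw h (fst H) {P. biclique G P}"
    and "\<forall>i\<in>fst H. \<forall>j\<in>fst H. i \<noteq> j \<longrightarrow> (h i \<inter> h j \<noteq> {} \<longleftrightarrow> snd H i j)"
proof -
  obtain f where f: "bij_betw f {P. biclique G P} (fst H)"
    and adj: "\<forall>P\<in>{P. biclique G P}. \<forall>Q\<in>{P. biclique G P}.
      (biclique G P \<and> biclique G Q \<and> P \<noteq> Q \<and> P \<inter> Q \<noteq> {}) \<longleftrightarrow> snd H (f P) (f Q)"
    using assms unfolding graph_iso_def KB_def fst_conv snd_conv by blast
  define h where "h = inv_into {P. biclique G P} f"
  have h: "bij_betw h (fst H) {P. biclique G P}" unfolding h_def by (rule bij_betw_inv_into[OF f])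
  have fh: "f (h i) = i" if "i \<in> fst H" for i
    unfolding h_def by (rule bij_betw_inv_into_right[OF f that])
  have "\<forall>i\<in>fst H. \<forall>j\<in>fst H. i \<noteq> j \<longrightarrow> (h i \<inter> h j \<noteq> {} \<longleftrightarrow> snd H i j)"
  proof (intro ballI impI)
    fix i j assume ij: "i \<in> fst H" "j \<in> fst H" "i \<noteq> j"
    have "h i \<in> {P. biclique G P}" "h j \<in> {P. biclique G P}" using bij_betw_apply[OF h] ij by blast+
    moreover have "h i \<noteq> h j" using fh ij by metis
    ultimately show "h i \<inter> h j \<noteq> {} \<longleftrightarrow> snd H i j"
      using adj[rule_format, of "h i" "h j"] fh[OF ij(1)] fh[OF ij(2)] by simp
  qed
  with h show thesis by (rule that)
qed

text \<open>What an isomorphism between KB(G) and the square of the net would provide: S i and X i are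
  the bicliques in the roles of the pendant vertex s_i and of the triangle vertex x_i.\<close>
locale net_square_bicliques =
  fixes G :: "'a graph" and S X :: "nat \<Rightarrow> 'a set"
  assumes graph: "is_graph G" and triangle_free: "triangle_free G"
    and S_biclique: "\<And>i. i < 3 \<Longrightarrow> biclique G (S i)"
    and X_biclique: "\<And>i. i < 3 \<Longrightarrow> biclique G (X i)"
    and bicliques: "\<And>P. biclique G P \<Longrightarrow> \<exists>i<3. P = S i \<or> P = X i"
    and S_disjoint: "\<And>i j. i < 3 \<Longrightarrow> j < 3 \<Longrightarrow> i \<noteq> j \<Longrightarrow> S i \<inter> S j = {}"
    and X_meets: "\<And>i P. i < 3 \<Longrightarrow> biclique G P \<Longrightarrow> X i \<inter> P \<noteq> {}"
    and X_neq_S: "\<And>i j. i < 3 \<Longrightarrow> j < 3 \<Longrightarrow> X i \<noteq> S j"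
    and X_inj: "\<And>i j. i < 3 \<Longrightarrow> j < 3 \<Longrightarrow> i \<noteq> j \<Longrightarrow> X i \<noteq> X j"
begin

text \<open>Otherwise S i would be closed under neighbourhoods and swallow X 0.\<close>
lemma ex_star_neq_S:
  assumes i: "i < 3"
  shows "\<exists>u\<in>S i. star G u \<noteq> S i"
proof (rule ccontr)
  assume "\<not> (\<exists>u\<in>S i. star G u \<noteq> S i)"
  then have closed: "w \<in> S i" if "v \<in> S i" "snd G v w" for v w
    using that adj_in_star[of G v w] by blast
  have "X 0 \<inter> S i \<noteq> {}" using X_meets[of 0 "S i"] S_biclique[OF i] by simp
  then obtain u where u: "u \<in> S i" "u \<in> X 0" by blast
  have "X 0 \<subseteq> S i"
    using biclique_subset_of_nbhd_closed[OF graph X_biclique[of 0] u] closed by simp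
  then have "X 0 = S i" using biclique_subset_eq X_biclique[of 0] S_biclique[OF i] by simp
  then show False using X_neq_S[of 0 i] i by simp
qed

definition pivot :: "nat \<Rightarrow> 'a" where
  "pivot i = (SOME u. u \<in> S i \<and> star G u \<noteq> S i)"

definition Y :: "nat \<Rightarrow> 'a set" where
  "Y i = star G (pivot i)"

lemma
  assumes "i < 3"
  shows pivot_in_S: "pivot i \<in> S i" and Y_neq_S: "Y i \<noteq> S i"
proof -
  have "\<exists>u. u \<in> S i \<and> star G u \<noteq> S i" using ex_star_neq_S[OF assms] by blast
  then have "pivot i \<in> S i \<and> star G (pivot i) \<noteq> S i" unfolding pivot_def by (rule someI_ex)
  then show "pivot i \<in> S i" "Y i \<noteq> S i" unfolding Y_def by blast+
qed

lemma Y_biclique: "i < 3 \<Longrightarrow> biclique G (Y i)"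
  unfolding Y_def by (rule star_biclique[OF graph triangle_free S_biclique pivot_in_S])

lemma star_neq_other_S:
  assumes i: "i < 3" and j: "j < 3" and ij: "i \<noteq> j" and u: "u \<in> S i"
  shows "star G u \<noteq> S j"
proof
  assume "star G u = S j"
  moreover have "u \<in> star G u" using biclique_subset_vertices[OF S_biclique[OF i]] u self_in_star[of u G] by blast
  ultimately show False using S_disjoint[OF i j ij] u by blast
qed

lemma Y_in_X: assumes i: "i < 3" shows "\<exists>m<3. Y i = X m"
proof -
  obtain m where m: "m < 3" "Y i = S m \<or> Y i = X m" using bicliques[OF Y_biclique[OF i]] by blast
  have "Y i \<noteq> S m"
  proof (cases "m = i")
    case True then show ?thesis using Y_neq_S[OF i] by simp
  next
    case False
    then show ?thesis unfolding Y_def by (rule star_neq_other_S[OF i m(1) not_sym pivot_in_S[OF i]])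
  qed
  then show ?thesis using m by blast
qed

lemma Y_inj: assumes i: "i < 3" and k: "k < 3" and eq: "Y i = Y k" shows "i = k"
proof (rule ccontr)
  assume ik: "i \<noteq> k"
  have "S i \<inter> S k \<noteq> {}"
    using bicliques_meet_if_same_star[OF graph triangle_free S_biclique[OF i] S_biclique[OF k]
        pivot_in_S[OF i] pivot_in_S[OF k]] eq
    unfolding Y_def by blast
  then show False using S_disjoint[OF i k ik] by blast
qed

text \<open>Three distinct Y's among the three X's.\<close>
lemma X_in_Y: assumes j: "j < 3" shows "\<exists>k<3. X j = Y k"
proof -
  have sub: "Y ` {0..<3} \<subseteq> X ` {0..<3}" using Y_in_X by fastforce
  have "inj_on Y {0..<3}" using Y_inj unfolding inj_on_def by auto
  then have "card (Y ` {0..<3}) = 3" by (simp add: card_image)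
  moreover have "card (X ` {0..<3}) \<le> 3" using card_image_le[of "{0..<3::nat}" X] by simp
  ultimately have "Y ` {0..<3} = X ` {0..<3}" using card_subset_eq[OF _ sub] card_mono[OF _ sub] by simp
  then have "X j \<in> Y ` {0..<3}" using j by auto
  then show ?thesis by auto
qed

lemma Y_meets: "k < 3 \<Longrightarrow> biclique G P \<Longrightarrow> Y k \<inter> P \<noteq> {}"
  using Y_in_X X_meets by blast

lemma star_of_S:
  assumes i: "i < 3" and u: "u \<in> S i"
  shows "star G u = S i \<or> star G u = Y i"
proof -
  obtain m where m: "m < 3" "star G u = S m \<or> star G u = X m"
    using bicliques[OF star_biclique[OF graph triangle_free S_biclique[OF i] u]] by blast
  show ?thesis
  proof (cases "star G u = S m")
    case True
    then show ?thesis using star_neq_other_S[OF i m(1) _ u] by (cases "m = i") auto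
  next
    case False
    then obtain k where k: "k < 3" "star G u = Y k" using m X_in_Y by blast
    have "S i \<inter> S k \<noteq> {}"
      using bicliques_meet_if_same_star[OF graph triangle_free S_biclique[OF i] S_biclique[OF k(1)]
          u pivot_in_S[OF k(1)]] k(2)
      unfolding Y_def by blast
    then have "k = i" using S_disjoint[OF i k(1)] by blast
    then show ?thesis using k by blast
  qed
qed

lemma star_of_S_in_other_Y:
  assumes i: "i < 3" and k: "k < 3" and ik: "i \<noteq> k" and u: "u \<in> S i" "u \<in> Y k"
  shows "star G u = Y i"
proof -
  have "star G u \<noteq> S i"
  proof
    assume "star G u = S i"
    moreover have "S k \<inter> star G u \<noteq> {}"
      using biclique_meets_star_of_star_member[OF graph S_biclique[OF k] pivot_in_S[OF k]] u(2)
      unfolding Y_def by blast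
    ultimately show False using S_disjoint[OF k i] ik by auto
  qed
  then show ?thesis using star_of_S[OF i u(1)] by blast
qed

lemma S_Y_vertex:
  assumes "i < 3" "k < 3" "i \<noteq> k"
  obtains u where "u \<in> S i" "u \<in> Y k" "star G u = Y i"
  using Y_meets[OF assms(2) S_biclique[OF assms(1)]] star_of_S_in_other_Y[OF assms] by blast

lemma adj_of_crossed_stars:
  assumes i: "i < 3" and k: "k < 3" and ik: "i \<noteq> k"
    and a: "a \<in> Y k" "star G a = Y i" and b: "b \<in> Y i" "star G b = Y k"
  shows "snd G a b"
proof (rule adj_if_in_distinct_stars[OF graph])
  show "star G a \<noteq> star G b" using a(2) b(2) Y_inj[OF i k] ik by auto
  show "b \<in> star G a" "a \<in> star G b" using a b by simp_all
qed

text \<open>Two vertices of S i whose star is Y i either cover S i by their neighbourhoods (which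
  would give S i = Y i) or are non-adjacent, hence twins.\<close>
lemma same_nbhd_if_star_Y:
  assumes i: "i < 3" and v: "v \<in> S i" "v' \<in> S i" and sv: "star G v = Y i" "star G v' = Y i"
  shows "nbhd G v = nbhd G v'"
proof (cases "snd G v v'")
  case True
  have "S i \<subseteq> Y i"
  proof
    fix x assume x: "x \<in> S i"
    have "snd G x v \<or> snd G x v'"
      using complete_bipartite_edge_dominates[OF graph biclique_complete_bipartite v True x]
        S_biclique[OF i] by blast
    then have "x \<in> star G v \<or> x \<in> star G v'"
      using adj_in_star[of G v x] adj_in_star[of G v' x] graph_adj_sym[OF graph, of x v]
        graph_adj_sym[OF graph, of x v'] by blast
    then show "x \<in> Y i" using sv by blast
  qed
  then have "S i = Y i" using biclique_subset_eq S_biclique[OF i] Y_biclique[OF i] by blast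
  then show ?thesis using Y_neq_S[OF i] by simp
next
  case False
  have "v \<in> fst G" "v' \<in> fst G" using biclique_subset_vertices[OF S_biclique[OF i]] v by auto
  then have "v' \<in> star G v" "v \<in> star G v'" using self_in_star sv by metis+
  then show ?thesis using nbhd_eq_if_nonadj_in_stars[OF graph False] by blast
qed

lemma inconsistent: False
proof -
  obtain v where v: "v \<in> S 0" "v \<in> Y 1" "star G v = Y 0" using S_Y_vertex[of 0 1] by auto
  obtain w where w: "w \<in> S 1" "w \<in> Y 0" "star G w = Y 1" using S_Y_vertex[of 1 0] by auto
  obtain v' where v': "v' \<in> S 0" "v' \<in> Y 2" "star G v' = Y 0" using S_Y_vertex[of 0 2] by auto
  obtain z where z: "z \<in> S 2" "z \<in> Y 0" "star G z = Y 2" using S_Y_vertex[of 2 0] by auto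
  obtain w' where w': "w' \<in> S 1" "w' \<in> Y 2" "star G w' = Y 1" using S_Y_vertex[of 1 2] by auto
  obtain z' where z': "z' \<in> S 2" "z' \<in> Y 1" "star G z' = Y 2" using S_Y_vertex[of 2 1] by auto
  have vw: "snd G v w" using v w by (intro adj_of_crossed_stars[of 0 1]) simp_all
  have v'z: "snd G v' z" using v' z by (intro adj_of_crossed_stars[of 0 2]) simp_all
  have w'z': "snd G w' z'" using w' z' by (intro adj_of_crossed_stars[of 1 2]) simp_all
  have "nbhd G v = nbhd G v'" using v v' by (intro same_nbhd_if_star_Y[of 0]) simp_all
  then have v'w: "snd G v' w" using vw unfolding nbhd_eq_iff_adj by blast
  have "nbhd G w = nbhd G w'" using w w' by (intro same_nbhd_if_star_Y[of 1]) simp_all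
  then have "snd G w z'" using w'z' unfolding nbhd_eq_iff_adj by blast
  then have z'w: "snd G z' w" by (rule graph_adj_sym[OF graph])
  have "nbhd G z = nbhd G z'" using z z' by (intro same_nbhd_if_star_Y[of 2]) simp_all
  then have "snd G z w" using z'w unfolding nbhd_eq_iff_adj by blast
  then show False using triangle_freeD[OF triangle_free v'w graph_adj_sym[OF graph]] v'z by blast
qed

end

lemma KB_not_iso_graph_square_net:
  assumes g: "is_graph G" and t: "triangle_free G"
  shows "\<not> graph_iso (KB G) (graph_square net)"
proof
  assume iso: "graph_iso (KB G) (graph_square net)"
  have V: "fst (graph_square net) = {0..5}" by (simp add: graph_square_def net_def)
  obtain h where h0: "bij_betw h (fst (graph_square net)) {P. biclique G P}"
    and meet0: "\<forall>i\<in>fst (graph_square net). \<forall>j\<in>fst (graph_square net). i \<noteq> j \<longrightarrow>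
      (h i \<inter> h j \<noteq> {} \<longleftrightarrow> snd (graph_square net) i j)"
    by (rule KB_iso_indexing[OF iso])
  have h: "bij_betw h {0..5} {P. biclique G P}" using h0 V by simp
  have meet: "h i \<inter> h j \<noteq> {} \<longleftrightarrow> \<not> (3 \<le> i \<and> 3 \<le> j)" if ij: "i \<le> 5" "j \<le> 5" "i \<noteq> j" for i j
  proof -
    have "i \<in> fst (graph_square net)" "j \<in> fst (graph_square net)" using V ij by auto
    from meet0[rule_format, OF this ij(3)] show ?thesis using graph_square_net_adj[OF ij(1,2)] ij(3) by simp
  qed
  have hb: "biclique G (h i)" if "i \<le> 5" for i using bij_betw_apply[OF h] that by simp
  have hinj: "h i \<noteq> h j" if "i \<le> 5" "j \<le> 5" "i \<noteq> j" for i j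
    using that inj_on_eq_iff[OF bij_betw_imp_inj_on[OF h], of i j] by simp
  have onto: "\<exists>k\<le>5. P = h k" if "biclique G P" for P
  proof -
    have "P \<in> h ` {0..5}" using that bij_betw_imp_surj_on[OF h] by simp
    then show ?thesis by auto
  qed
  interpret net_square_bicliques G "\<lambda>i. h (i + 3)" h
  proof
    show "\<exists>i<3. P = h (i + 3) \<or> P = h i" if P: "biclique G P" for P
    proof -
      obtain k where k: "k \<le> 5" "P = h k" using onto[OF P] by blast
      show ?thesis
      proof (cases "k < 3")
        case True then show ?thesis using k(2) by blast
      next
        case False
        then have "k - 3 < 3" "P = h (k - 3 + 3)" using k by auto
        then show ?thesis by blast
      qed
    qed
    show "h i \<inter> P \<noteq> {}" if i: "i < 3" and P: "biclique G P" for i P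
    proof -
      obtain k where k: "k \<le> 5" "P = h k" using onto[OF P] by blast
      show ?thesis
      proof (cases "k = i")
        case True then show ?thesis using k biclique_nonempty[OF P] by simp
      next
        case False then show ?thesis using meet[of i k] i k by simp
      qed
    qed
    show "h (i + 3) \<inter> h (j + 3) = {}" if "i < 3" "j < 3" "i \<noteq> j" for i j
      using meet[of "i + 3" "j + 3"] that by simp
    show "h i \<noteq> h (j + 3)" if "i < 3" "j < 3" for i j using hinj[of i "j + 3"] that by simp
    show "h i \<noteq> h j" if "i < 3" "j < 3" "i \<noteq> j" for i j using hinj that by simp
    show "biclique G (h (i + 3))" "biclique G (h i)" if "i < 3" for i using hb that by simp_all
  qed (fact g t)+
  show False by (rule inconsistent)
qed

theorem corollary2:
  shows "(\<forall>G :: 'a graph. is_graph G \<and> triangle_free G \<longrightarrow>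
            (\<exists>H :: nat graph. is_graph H \<and> graph_iso (KB G) (graph_square H)))
       \<and> (\<exists>H :: nat graph. is_graph H \<and>
            (\<forall>G :: 'b graph. is_graph G \<and> triangle_free G \<longrightarrow>
               \<not> graph_iso (KB G) (graph_square H)))
       \<and> (\<forall>G :: 'b graph. is_graph G \<and> triangle_free G \<longrightarrow>
               \<not> graph_iso (KB G) (graph_square net))"
  using KB_triangle_free_iso_graph_square KB_not_iso_graph_square_net is_graph_net by blast

end
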